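(* Let $\{g(\cdot,\theta):\theta\ge 0\}$ be a family of probability densities on $[0,\infty)$ with distribution functions $G(\cdot,\theta)$, such that $g(x,0)=e^{-x}$ and the family is regular in the sense that $g$ is differentiable in $\theta$ and differentiation with respect to $\theta$ under all integrals appearing below is permitted. Put $h(x)=\frac{\partial}{\partial\theta}g(x,\theta)\big|_{\theta=0}$. Let $b(\theta)$ be the limit in probability of the statistic $I_n$ (defined in the context) when $X_1,X_2,\dots$ are i.i.d. with density $g(\cdot,\theta)$; equivalently $$b(\theta)=P\{\max(X_2,X_3,X_4)<X_5\}-P\{X_1+\mathrm{med}(X_2,X_3,X_4)<X_5\}$$ with $X_1,\dots,X_5$ i.i.d. with density $g(\cdot,\theta)$. Then $$b(\theta)=5\theta\int_0^\infty \psi(x)h(x)\,dx+o(\theta),\qquad \theta\to 0,$$ where $\psi(s)=-\frac{1}{20}+\frac{2}{5}e^{-3s}-\frac{9}{10}e^{-2s}+\frac{1}{2}e^{-s}$.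
   Context: For i.i.d. non-negative observations $X_1,\dots,X_n$ with empirical distribution function $F_n$, define $$G_n(t)=\frac{1}{n^4}\sum_{i,j,k,l=1}^n I\{X_i+\mathrm{med}(X_j,X_k,X_l)<t\},\qquad H_n(t)=\frac{1}{n^3}\sum_{j,k,l=1}^n I\{\max(X_j,X_k,X_l)<t\},$$ ($\mathrm{med}$ = median of three numbers) and $I_n=\int_0^\infty (H_n(t)-G_n(t))\,dF_n(t)$. The function $\psi$ is the projection $\psi(s)=E[\Psi(X_1,\dots,X_5)\mid X_1=s]$ under i.i.d. standard exponential $X_i$ of the symmetrized kernel $\Psi=\frac{1}{5!}\sum_{\pi}\big(I\{\max(X_{\pi_2},X_{\pi_3},X_{\pi_4})<X_{\pi_5}\}-I\{X_{\pi_1}+\mathrm{med}(X_{\pi_2},X_{\pi_3},X_{\pi_4})<X_{\pi_5}\}\big)$, the sum being over all permutations $\pi$ of $\{1,\dots,5\}$. *)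

theory Defs
  imports "HOL-Probability.Probability" "HOL-Library.Landau_Symbols"
begin

definition med3 :: "real \<Rightarrow> real \<Rightarrow> real \<Rightarrow> real" where
  "med3 a b c = max (min a b) (min (max a b) c)"

definition psi :: "real \<Rightarrow> real" where
  "psi s = - (1/20) + (2/5) * exp (- (3 * s)) - (9/10) * exp (- (2 * s)) + (1/2) * exp (- s)"

text \<open>Joint law of X_1,...,X_5 (indices 0..4) i.i.d. with density g(.,theta).\<close>
definition sample5 :: "(real \<Rightarrow> real \<Rightarrow> real) \<Rightarrow> real \<Rightarrow> (nat \<Rightarrow> real) measure" where
  "sample5 g \<theta> = PiM {..<5} (\<lambda>_. density lborel (\<lambda>x. ennreal (g x \<theta>)))"

definition evA :: "(nat \<Rightarrow> real) set" where
  "evA = {\<omega>. max (\<omega> 1) (max (\<omega> 2) (\<omega> 3)) < \<omega> 4}"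

definition evB :: "(nat \<Rightarrow> real) set" where
  "evB = {\<omega>. \<omega> 0 + med3 (\<omega> 1) (\<omega> 2) (\<omega> 3) < \<omega> 4}"

definition prob5 :: "(real \<Rightarrow> real \<Rightarrow> real) \<Rightarrow> real \<Rightarrow> (nat \<Rightarrow> real) set \<Rightarrow> real" where
  "prob5 g \<theta> E = measure (sample5 g \<theta>) (E \<inter> space (sample5 g \<theta>))"

definition bfun :: "(real \<Rightarrow> real \<Rightarrow> real) \<Rightarrow> real \<Rightarrow> real" where
  "bfun g \<theta> = prob5 g \<theta> evA - prob5 g \<theta> evB"

text \<open>theta-derivative at 0 of the joint density prod_i g(x_i,theta) (product rule),
  given h = d/dtheta g(.,theta) at 0.\<close>
definition dens_deriv :: "(real \<Rightarrow> real \<Rightarrow> real) \<Rightarrow> (real \<Rightarrow> real) \<Rightarrow> (nat \<Rightarrow> real) \<Rightarrow> real" where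
  "dens_deriv g h \<omega> = (\<Sum>i<5. h (\<omega> i) * (\<Prod>j\<in>{..<5} - {i}. g (\<omega> j) 0))"

end

theory Submission
  imports Defs "HOL-Real_Asymp.Real_Asymp"
begin

text \<open>
  For a standard exponential sample both events defining \<open>b\<close> have probability \<open>1/4\<close>, so
  \<open>b(0) = 0\<close> and the claim says that \<open>b'(0) = 5 \<integral> \<psi> h\<close>. Differentiating the product density
  under the integral sign gives \<open>b'(0) = \<Sum>\<^sub>i \<integral> h(s) (P(A | X\<^sub>i = s) - P(B | X\<^sub>i = s)) ds\<close>, where
  \<open>A\<close>, \<open>B\<close> are the two events and the \<open>X\<^sub>i\<close> are i.i.d. standard exponential. These ten
  conditional probabilities are computed in closed form by Fubini and elementary integrals of
  exponentials (\<open>X\<^sub>2, X\<^sub>3, X\<^sub>4\<close> play symmetric roles), and their differences add up to \<open>5 \<psi>(s)\<close>.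
\<close>

subsection \<open>The standard exponential distribution\<close>

definition exp_density :: "real \<Rightarrow> real" where
  "exp_density x = (if 0 \<le> x then exp (- x) else 0)"

lemma exp_density_nonneg [simp]: "0 \<le> exp_density x"
  by (simp add: exp_density_def)

lemma borel_measurable_exp_density [measurable]: "exp_density \<in> borel_measurable borel"
  unfolding exp_density_def by measurable

definition exp_cdf :: "real \<Rightarrow> real" where
  "exp_cdf c = 1 - exp (- max c 0)"

lemma exp_cdf_nonneg [simp]: "0 \<le> exp_cdf c"
  by (simp add: exp_cdf_def)

lemma exp_cdf_le_1 [simp]: "exp_cdf c \<le> 1"
  by (simp add: exp_cdf_def)

lemma borel_measurable_exp_cdf [measurable]: "exp_cdf \<in> borel_measurable borel"
  unfolding exp_cdf_def by measurable

lemma nn_integral_FTC_atLeast_indicator: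
  fixes f F :: "real \<Rightarrow> real"
  assumes "f \<in> borel_measurable borel" "\<And>x. a \<le> x \<Longrightarrow> DERIV F x :> f x"
    "\<And>x. a \<le> x \<Longrightarrow> 0 \<le> f x" "(F \<longlongrightarrow> T) at_top"
  shows "(\<integral>\<^sup>+x. ennreal (f x * indicator {a..} x) \<partial>lborel) = ennreal (T - F a)"
proof -
  have "(\<integral>\<^sup>+x. ennreal (f x * indicator {a..} x) \<partial>lborel) = (\<integral>\<^sup>+x. ennreal (f x) * indicator {a..} x \<partial>lborel)"
    by (intro nn_integral_cong) (auto split: split_indicator)
  also have "\<dots> = ennreal (T - F a)" by (rule nn_integral_FTC_atLeast[OF assms])
  finally show ?thesis .
qed

lemma nn_integral_FTC_Icc_indicator:
  fixes f F :: "real \<Rightarrow> real"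
  assumes "f \<in> borel_measurable borel" "\<And>x. x \<in> {a..b} \<Longrightarrow> DERIV F x :> f x"
    "\<And>x. x \<in> {a..b} \<Longrightarrow> 0 \<le> f x" "a \<le> b"
  shows "(\<integral>\<^sup>+x. ennreal (f x * indicator {a..b} x) \<partial>lborel) = ennreal (F b - F a)"
proof -
  have "(\<integral>\<^sup>+x. ennreal (f x * indicator {a..b} x) \<partial>lborel) = (\<integral>\<^sup>+x. ennreal (f x) * indicator {a..b} x \<partial>lborel)"
    by (intro nn_integral_cong) (auto split: split_indicator)
  also have "\<dots> = ennreal (F b - F a)" by (rule nn_integral_FTC_Icc[OF assms])
  finally show ?thesis .
qed

lemma nn_integral_exp_density: "(\<integral>\<^sup>+x. ennreal (exp_density x) \<partial>lborel) = 1"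
proof -
  have "(\<integral>\<^sup>+x. ennreal (exp_density x) \<partial>lborel) = (\<integral>\<^sup>+x. ennreal (exp (-x) * indicator {0..} x) \<partial>lborel)"
    by (intro nn_integral_cong) (auto simp: exp_density_def split: split_indicator)
  also have "\<dots> = ennreal (0 - (- exp (- 0)))"
    by (rule nn_integral_FTC_atLeast_indicator[where F="\<lambda>x. - exp (-x)"])
       (auto intro!: derivative_eq_intros, real_asymp)
  finally show ?thesis by simp
qed

definition exp_density_lt :: "real \<Rightarrow> real \<Rightarrow> real" where
  "exp_density_lt c y = exp_density y * indicator {..<c} y"

definition exp_density_ge :: "real \<Rightarrow> real \<Rightarrow> real" where
  "exp_density_ge c y = exp_density y * indicator {c..} y"

lemma exp_density_lt_nonneg [simp]: "0 \<le> exp_density_lt c y"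
  by (simp add: exp_density_lt_def)

lemma exp_density_ge_nonneg [simp]: "0 \<le> exp_density_ge c y"
  by (simp add: exp_density_ge_def)

lemma borel_measurable_exp_density_lt [measurable]: "exp_density_lt c \<in> borel_measurable borel"
  unfolding exp_density_lt_def by measurable

lemma borel_measurable_exp_density_ge [measurable]: "exp_density_ge c \<in> borel_measurable borel"
  unfolding exp_density_ge_def by measurable

lemma nn_integral_exp_density_lt:
  "(\<integral>\<^sup>+x. ennreal (exp_density_lt c x) \<partial>lborel) = ennreal (exp_cdf c)"
proof (cases "c \<le> 0")
  case True
  have "(\<integral>\<^sup>+x. ennreal (exp_density_lt c x) \<partial>lborel) = (\<integral>\<^sup>+(x::real). 0 \<partial>lborel)"
    using True by (intro nn_integral_cong) (auto simp: exp_density_lt_def exp_density_def split: split_indicator)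
  then show ?thesis using True by (simp add: exp_cdf_def)
next
  case False
  have "(\<integral>\<^sup>+x. ennreal (exp_density_lt c x) \<partial>lborel) = (\<integral>\<^sup>+x. ennreal (exp (-x) * indicator {0..c} x) \<partial>lborel)"
    by (intro nn_integral_cong_AE, rule AE_I'[where N="{c}"])
       (auto simp: exp_density_lt_def exp_density_def split: split_indicator)
  also have "\<dots> = ennreal (- exp (-c) - (- exp (- 0)))"
    by (rule nn_integral_FTC_Icc_indicator[where F="\<lambda>x. - exp (-x)"])
       (use False in \<open>auto intro!: derivative_eq_intros\<close>)
  finally show ?thesis using False by (simp add: exp_cdf_def)
qed

lemma nn_integral_exp_density_ge:
  "(\<integral>\<^sup>+x. ennreal (exp_density_ge c x) \<partial>lborel) = ennreal (1 - exp_cdf c)"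
proof (cases "c \<le> 0")
  case True
  have "(\<integral>\<^sup>+x. ennreal (exp_density_ge c x) \<partial>lborel) = (\<integral>\<^sup>+x. ennreal (exp_density x) \<partial>lborel)"
    using True by (intro nn_integral_cong) (auto simp: exp_density_ge_def exp_density_def split: split_indicator)
  then show ?thesis using True by (simp add: exp_cdf_def nn_integral_exp_density)
next
  case False
  have "(\<integral>\<^sup>+x. ennreal (exp_density_ge c x) \<partial>lborel) = (\<integral>\<^sup>+x. ennreal (exp (-x) * indicator {c..} x) \<partial>lborel)"
    using False by (intro nn_integral_cong) (auto simp: exp_density_ge_def exp_density_def split: split_indicator)
  also have "\<dots> = ennreal (0 - (- exp (- c)))"
    by (rule nn_integral_FTC_atLeast_indicator[where F="\<lambda>x. - exp (-x)"])
       (auto intro!: derivative_eq_intros, real_asymp)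
  finally show ?thesis using False by (simp add: exp_cdf_def)
qed

subsection \<open>Finite products of Lebesgue measure\<close>

lemma product_sigma_finite_lborel: "product_sigma_finite (\<lambda>_::'i. lborel::real measure)"
  by (simp add: product_sigma_finite_def lborel.sigma_finite_measure_axioms)

lemma nn_integral_PiM_insert_lborel:
  assumes "finite I" "i \<notin> I" "f \<in> borel_measurable (PiM (insert i I) (\<lambda>_::'i. lborel::real measure))"
  shows "integral\<^sup>N (PiM (insert i I) (\<lambda>_. lborel)) f
    = (\<integral>\<^sup>+ y. (\<integral>\<^sup>+ x. f (x(i := y)) \<partial>PiM I (\<lambda>_. lborel)) \<partial>lborel)"
  using product_sigma_finite.product_nn_integral_insert_rev[OF product_sigma_finite_lborel assms] .

lemma nn_integral_PiM_lborel_prod: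
  assumes "finite I" "\<And>i x. i \<in> I \<Longrightarrow> 0 \<le> f i x" "\<And>i. i \<in> I \<Longrightarrow> f i \<in> borel_measurable borel"
  shows "(\<integral>\<^sup>+ x. ennreal (\<Prod>i\<in>I. f i (x i)) \<partial>PiM I (\<lambda>_::'i. lborel::real measure))
    = (\<Prod>i\<in>I. \<integral>\<^sup>+ x. ennreal (f i x) \<partial>lborel)"
proof -
  have "(\<integral>\<^sup>+ x. ennreal (\<Prod>i\<in>I. f i (x i)) \<partial>PiM I (\<lambda>_. lborel))
      = (\<integral>\<^sup>+ x. (\<Prod>i\<in>I. ennreal (f i (x i))) \<partial>PiM I (\<lambda>_. lborel))"
    using assms by (intro nn_integral_cong) (simp add: prod_ennreal)
  also have "\<dots> = (\<Prod>i\<in>I. \<integral>\<^sup>+ x. ennreal (f i x) \<partial>lborel)"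
    using assms by (intro product_sigma_finite.product_nn_integral_prod[OF product_sigma_finite_lborel]) auto
  finally show ?thesis .
qed

lemma nn_integral_PiM_lborel_pair:
  fixes f g :: "real \<Rightarrow> real"
  assumes "a \<noteq> b" "\<And>x. 0 \<le> f x" "\<And>x. 0 \<le> g x"
    "f \<in> borel_measurable borel" "g \<in> borel_measurable borel"
  shows "(\<integral>\<^sup>+x. ennreal (f (x a) * g (x b)) \<partial>PiM {a,b} (\<lambda>_. lborel))
    = (\<integral>\<^sup>+x. ennreal (f x) \<partial>lborel) * (\<integral>\<^sup>+x. ennreal (g x) \<partial>lborel)"
proof -
  define F where "F j = (if j = a then f else g)" for j
  have "(\<integral>\<^sup>+x. ennreal (f (x a) * g (x b)) \<partial>PiM {a,b} (\<lambda>_. lborel))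
      = (\<integral>\<^sup>+x. ennreal (\<Prod>j\<in>{a,b}. F j (x j)) \<partial>PiM {a,b} (\<lambda>_. lborel))"
    using assms(1) by (intro nn_integral_cong) (auto simp: F_def)
  also have "\<dots> = (\<Prod>j\<in>{a,b}. \<integral>\<^sup>+ x. ennreal (F j x) \<partial>lborel)"
    by (rule nn_integral_PiM_lborel_prod) (use assms in \<open>auto simp: F_def\<close>)
  finally show ?thesis using assms(1) by (simp add: F_def)
qed

lemma nn_integral_PiM_lborel_triple:
  fixes f g h :: "real \<Rightarrow> real"
  assumes "distinct [a,b,c]" "\<And>x. 0 \<le> f x" "\<And>x. 0 \<le> g x" "\<And>x. 0 \<le> h x"
    "f \<in> borel_measurable borel" "g \<in> borel_measurable borel" "h \<in> borel_measurable borel"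
  shows "(\<integral>\<^sup>+x. ennreal (f (x a) * g (x b) * h (x c)) \<partial>PiM {a,b,c} (\<lambda>_. lborel))
    = (\<integral>\<^sup>+x. ennreal (f x) \<partial>lborel) * (\<integral>\<^sup>+x. ennreal (g x) \<partial>lborel) * (\<integral>\<^sup>+x. ennreal (h x) \<partial>lborel)"
proof -
  define F where "F j = (if j = a then f else if j = b then g else h)" for j
  have "(\<integral>\<^sup>+x. ennreal (f (x a) * g (x b) * h (x c)) \<partial>PiM {a,b,c} (\<lambda>_. lborel))
      = (\<integral>\<^sup>+x. ennreal (\<Prod>j\<in>{a,b,c}. F j (x j)) \<partial>PiM {a,b,c} (\<lambda>_. lborel))"
    using assms(1) by (intro nn_integral_cong) (auto simp: F_def mult.assoc)
  also have "\<dots> = (\<Prod>j\<in>{a,b,c}. \<integral>\<^sup>+ x. ennreal (F j x) \<partial>lborel)"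
    by (rule nn_integral_PiM_lborel_prod) (use assms in \<open>auto simp: F_def\<close>)
  finally show ?thesis using assms(1) by (auto simp: F_def mult.assoc)
qed

lemma measurable_fun_upd_PiM_lborel:
  "(\<lambda>x. x(i := y)) \<in> measurable (PiM I (\<lambda>_. lborel)) (PiM (insert i I) (\<lambda>_::'i. lborel::real measure))"
  by (rule measurable_PiM_single') (auto simp: space_PiM PiE_iff extensional_def)

lemma PiM_density_lborel:
  fixes f :: "real \<Rightarrow> ennreal"
  assumes f: "f \<in> borel_measurable borel" "(\<integral>\<^sup>+x. f x \<partial>lborel) = 1" and I: "finite I"
  shows "PiM I (\<lambda>_. density lborel f) = density (PiM I (\<lambda>_::'i. lborel)) (\<lambda>\<omega>. \<Prod>j\<in>I. f (\<omega> j))"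
proof -
  have "finite_measure (density lborel f)"
    by (rule finite_measureI) (simp add: emeasure_density f)
  then have psf: "product_sigma_finite (\<lambda>_::'i. density lborel f)"
    unfolding product_sigma_finite_def using finite_measure.axioms(1) by blast
  show ?thesis
  proof (rule product_sigma_finite.PiM_eqI[OF psf I, symmetric])
    show "sets (density (PiM I (\<lambda>_. lborel)) (\<lambda>\<omega>. \<Prod>j\<in>I. f (\<omega> j))) = sets (PiM I (\<lambda>_. density lborel f))"
      by (simp only: sets_density) (rule sets_PiM_cong, auto)
  next
    fix A assume "\<And>i. i \<in> I \<Longrightarrow> A i \<in> sets (density lborel f)"
    then have A: "\<And>i. i \<in> I \<Longrightarrow> A i \<in> sets borel" by simp
    have ind: "indicator (PiE I A) \<omega> = (\<Prod>j\<in>I. indicator (A j) (\<omega> j) :: ennreal)"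
      if "\<omega> \<in> space (PiM I (\<lambda>_. lborel::real measure))" for \<omega>
      using that I by (auto simp: space_PiM PiE_iff indicator_def intro: prod_zero)
    have "emeasure (density (PiM I (\<lambda>_. lborel)) (\<lambda>\<omega>. \<Prod>j\<in>I. f (\<omega> j))) (PiE I A)
        = (\<integral>\<^sup>+\<omega>. (\<Prod>j\<in>I. f (\<omega> j)) * indicator (PiE I A) \<omega> \<partial>PiM I (\<lambda>_. lborel))"
      using A f I by (intro emeasure_density) (auto intro!: sets_PiM_I_finite)
    also have "\<dots> = (\<integral>\<^sup>+\<omega>. (\<Prod>j\<in>I. f (\<omega> j) * indicator (A j) (\<omega> j)) \<partial>PiM I (\<lambda>_. lborel))"
      by (intro nn_integral_cong) (simp add: ind prod.distrib)
    also have "\<dots> = (\<Prod>j\<in>I. \<integral>\<^sup>+x. f x * indicator (A j) x \<partial>lborel)"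
      using A f I by (intro product_sigma_finite.product_nn_integral_prod[OF product_sigma_finite_lborel]) auto
    also have "\<dots> = (\<Prod>j\<in>I. emeasure (density lborel f) (A j))"
      using A f by (intro prod.cong refl) (simp add: emeasure_density)
    finally show "emeasure (density (PiM I (\<lambda>_. lborel)) (\<lambda>\<omega>. \<Prod>j\<in>I. f (\<omega> j))) (PiE I A)
        = (\<Prod>j\<in>I. emeasure (density lborel f) (A j))" .
  qed
qed

lemma has_real_derivative_at_right_const_imp_zero:
  assumes "(f has_real_derivative D) (at_right a)" and "\<And>x. a \<le> x \<Longrightarrow> f x = f a"
  shows "D = 0"
proof -
  have "((\<lambda>y. (f y - f a) / (y - a)) \<longlongrightarrow> D) (at_right a)"
    using assms(1) by (simp add: has_field_derivative_iff)
  moreover have "((\<lambda>y. (f y - f a) / (y - a)) \<longlongrightarrow> 0) (at_right a)"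
    by (rule tendsto_eventually, rule eventually_mono[OF eventually_at_right_less])
       (simp add: assms(2)[OF less_imp_le])
  ultimately show ?thesis
    using tendsto_unique[of "at_right a"] by auto
qed

lemma has_real_derivative_at_right_0_imp_smallo:
  assumes "(f has_real_derivative D) (at_right 0)" and "f 0 = 0"
  shows "(\<lambda>\<theta>. f \<theta> - D * \<theta>) \<in> o[at_right 0](\<lambda>\<theta>. \<theta>)"
proof (rule smalloI_tendsto)
  have "((\<lambda>\<theta>. f \<theta> / \<theta> - D) \<longlongrightarrow> 0) (at_right 0)"
    using assms by (auto simp: has_field_derivative_iff intro: tendsto_eq_intros)
  then show "((\<lambda>\<theta>. (f \<theta> - D * \<theta>) / \<theta>) \<longlongrightarrow> 0) (at_right 0)"
    by (rule Lim_transform_eventually, intro eventually_mono[OF eventually_at_right_less])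
       (simp add: field_simps)
  show "\<forall>\<^sub>F \<theta> in at_right 0. \<theta> \<noteq> (0::real)"
    by (rule eventually_mono[OF eventually_at_right_less]) simp
qed

subsection \<open>Conditioning a standard exponential sample of size five on one coordinate\<close>

abbreviation lborel5 :: "(nat \<Rightarrow> real) measure" where
  "lborel5 \<equiv> PiM {..<5} (\<lambda>_. lborel)"

definition exp_density_except :: "nat \<Rightarrow> (nat \<Rightarrow> real) \<Rightarrow> real" where
  "exp_density_except i \<omega> = (\<Prod>j\<in>{..<5} - {i}. exp_density (\<omega> j))"

text \<open>\<open>exp_cond_prob E i s = P(E | X\<^sub>i\<^sub>+\<^sub>1 = s)\<close> for i.i.d. standard exponential \<open>X\<^sub>1, \<dots>, X\<^sub>5\<close>;
  as in \<open>evA\<close> and \<open>evB\<close>, coordinate \<open>i\<close> of a sample point holds \<open>X\<^sub>i\<^sub>+\<^sub>1\<close>.\<close>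

definition exp_cond_prob :: "(nat \<Rightarrow> real) set \<Rightarrow> nat \<Rightarrow> real \<Rightarrow> ennreal" where
  "exp_cond_prob E i s =
    (\<integral>\<^sup>+x. ennreal (indicator E (x(i := s)) * exp_density_except i x) \<partial>PiM ({..<5} - {i}) (\<lambda>_. lborel))"

lemma exp_density_except_nonneg [simp]: "0 \<le> exp_density_except i \<omega>"
  by (simp add: exp_density_except_def prod_nonneg)

lemma borel_measurable_exp_density_except [measurable]:
  assumes "{..<5} - {i} \<subseteq> I"
  shows "exp_density_except i \<in> borel_measurable (PiM I (\<lambda>_. lborel))"
  unfolding exp_density_except_def
proof (rule borel_measurable_prod)
  fix j assume "j \<in> {..<5} - {i}"
  then have "j \<in> I" using assms by auto
  then show "(\<lambda>\<omega>. exp_density (\<omega> j)) \<in> borel_measurable (PiM I (\<lambda>_. lborel))"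
    by measurable
qed

lemma exp_density_except_fun_upd [simp]: "exp_density_except i (x(i := y)) = exp_density_except i x"
  unfolding exp_density_except_def by (intro prod.cong) auto

lemma exp_density_except_eq:
  "exp_density_except 0 x = exp_density (x 1) * exp_density (x 2) * exp_density (x 3) * exp_density (x 4)"
  "exp_density_except 1 x = exp_density (x 0) * exp_density (x 2) * exp_density (x 3) * exp_density (x 4)"
  "exp_density_except 2 x = exp_density (x 0) * exp_density (x 1) * exp_density (x 3) * exp_density (x 4)"
  "exp_density_except 3 x = exp_density (x 0) * exp_density (x 1) * exp_density (x 2) * exp_density (x 4)"
  "exp_density_except 4 x = exp_density (x 0) * exp_density (x 1) * exp_density (x 2) * exp_density (x 3)"
  by (simp_all add: exp_density_except_def lessThan_nat_numeral lessThan_Suc insert_Diff_if mult_ac)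

lemma exp_cond_prob_Int_space:
  assumes "i < 5"
  shows "exp_cond_prob (E \<inter> space lborel5) i s = exp_cond_prob E i s"
proof -
  have "x(i := s) \<in> space lborel5" if "x \<in> space (PiM ({..<5} - {i}) (\<lambda>_. lborel::real measure))" for x
    using that assms by (auto simp: space_PiM PiE_iff extensional_def)
  then show ?thesis
    unfolding exp_cond_prob_def by (intro nn_integral_cong) (simp add: indicator_def)
qed

lemma nn_integral_disintegrate_coordinate:
  assumes i: "i < 5" and E: "E \<in> sets lborel5"
    and k: "k \<in> borel_measurable borel" "\<And>x. 0 \<le> k x" "\<And>x. x < 0 \<Longrightarrow> k x = 0"
    and p: "\<And>s. 0 \<le> s \<Longrightarrow> exp_cond_prob E i s = ennreal (p s)"
  shows "(\<integral>\<^sup>+\<omega>. ennreal (indicator E \<omega> * (k (\<omega> i) * exp_density_except i \<omega>)) \<partial>lborel5)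
    = (\<integral>\<^sup>+s. ennreal (k s * p s) \<partial>lborel)"
proof -
  let ?I = "{..<5::nat} - {i}"
  note k(1)[measurable]
  have ins: "insert i ?I = {..<5}" using i by auto
  have E': "E \<in> sets (PiM (insert i ?I) (\<lambda>_. lborel::real measure))" using E ins by simp
  have "(\<lambda>\<omega>. k (\<omega> i)) \<in> borel_measurable lborel5"
    by measurable (use i in auto)
  then have meas: "(\<lambda>\<omega>. ennreal (indicator E \<omega> * (k (\<omega> i) * exp_density_except i \<omega>)))
      \<in> borel_measurable (PiM (insert i ?I) (\<lambda>_. lborel))"
    unfolding ins using E by (intro measurable_compose[OF _ measurable_ennreal] borel_measurable_times
        borel_measurable_indicator borel_measurable_exp_density_except) auto
  have "(\<integral>\<^sup>+\<omega>. ennreal (indicator E \<omega> * (k (\<omega> i) * exp_density_except i \<omega>)) \<partial>lborel5)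
      = (\<integral>\<^sup>+\<omega>. ennreal (indicator E \<omega> * (k (\<omega> i) * exp_density_except i \<omega>)) \<partial>PiM (insert i ?I) (\<lambda>_. lborel))"
    by (simp only: ins)
  also have "\<dots> = (\<integral>\<^sup>+ y. (\<integral>\<^sup>+ x. ennreal (indicator E (x(i := y)) * (k y * exp_density_except i x))
          \<partial>PiM ?I (\<lambda>_. lborel)) \<partial>lborel)"
    using nn_integral_PiM_insert_lborel[OF _ _ meas] by simp
  also have "\<dots> = (\<integral>\<^sup>+ y. ennreal (k y) * exp_cond_prob E i y \<partial>lborel)"
  proof (intro nn_integral_cong)
    fix y
    have "(\<lambda>x. indicator E (x(i := y))) \<in> borel_measurable (PiM ?I (\<lambda>_. lborel))"
      using measurable_comp[OF measurable_fun_upd_PiM_lborel borel_measurable_indicator[OF E']]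
      by (simp add: comp_def)
    then have "(\<integral>\<^sup>+ x. ennreal (k y) * ennreal (indicator E (x(i := y)) * exp_density_except i x) \<partial>PiM ?I (\<lambda>_. lborel))
        = ennreal (k y) * exp_cond_prob E i y"
      unfolding exp_cond_prob_def
      by (intro nn_integral_cmult measurable_compose[OF _ measurable_ennreal] borel_measurable_times
          borel_measurable_exp_density_except) auto
    then show "(\<integral>\<^sup>+ x. ennreal (indicator E (x(i := y)) * (k y * exp_density_except i x)) \<partial>PiM ?I (\<lambda>_. lborel))
        = ennreal (k y) * exp_cond_prob E i y"
      using k by (simp add: ennreal_mult'[symmetric] mult.left_commute)
  qed
  also have "\<dots> = (\<integral>\<^sup>+s. ennreal (k s * p s) \<partial>lborel)"
  proof (intro nn_integral_cong)
    fix s :: real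
    show "ennreal (k s) * exp_cond_prob E i s = ennreal (k s * p s)"
      by (cases "0 \<le> s") (use k p in \<open>simp_all add: ennreal_mult'\<close>)
  qed
  finally show ?thesis .
qed

lemma integral_disintegrate_coordinate_nonneg:
  assumes i: "i < 5" and E: "E \<in> sets lborel5"
    and k: "integrable lborel k" "\<And>x. 0 \<le> k x" "\<And>x. x < 0 \<Longrightarrow> k x = 0"
    and p: "p \<in> borel_measurable borel" "\<And>s. 0 \<le> s \<Longrightarrow> 0 \<le> p s" "\<And>s. 0 \<le> s \<Longrightarrow> p s \<le> 1"
      "\<And>s. 0 \<le> s \<Longrightarrow> exp_cond_prob E i s = ennreal (p s)"
  shows "integrable lborel5 (\<lambda>\<omega>. indicator E \<omega> * (k (\<omega> i) * exp_density_except i \<omega>))"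
    and "integrable lborel (\<lambda>s. k s * p s)"
    and "(\<integral>\<omega>. indicator E \<omega> * (k (\<omega> i) * exp_density_except i \<omega>) \<partial>lborel5) = (\<integral>s. k s * p s \<partial>lborel)"
proof -
  have [measurable]: "k \<in> borel_measurable borel" using k(1) by auto
  note p(1)[measurable]
  have kp_nonneg: "0 \<le> k s * p s" for s
    using k(2,3) p(2) by (cases "0 \<le> s") auto
  have kp_le: "ennreal (k s * p s) \<le> ennreal (k s)" for s
    using k(2,3) p(2,3) by (cases "0 \<le> s") (auto intro!: ennreal_leI mult_left_le)
  have eq: "(\<integral>\<^sup>+\<omega>. ennreal (indicator E \<omega> * (k (\<omega> i) * exp_density_except i \<omega>)) \<partial>lborel5)
      = (\<integral>\<^sup>+s. ennreal (k s * p s) \<partial>lborel)"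
    by (rule nn_integral_disintegrate_coordinate[OF i E _ k(2,3) p(4)]) simp
  have "(\<integral>\<^sup>+s. ennreal (k s * p s) \<partial>lborel) \<le> (\<integral>\<^sup>+s. ennreal (k s) \<partial>lborel)"
    by (intro nn_integral_mono kp_le)
  also have "\<dots> < \<infinity>"
    using k(1,2) by (subst nn_integral_eq_integral) auto
  finally have finite: "(\<integral>\<^sup>+s. ennreal (k s * p s) \<partial>lborel) < \<infinity>" .
  have "(\<lambda>\<omega>. k (\<omega> i)) \<in> borel_measurable lborel5"
    by measurable (use i in auto)
  then have meas: "(\<lambda>\<omega>. indicator E \<omega> * (k (\<omega> i) * exp_density_except i \<omega>)) \<in> borel_measurable lborel5"
    using E by (intro borel_measurable_times borel_measurable_indicator borel_measurable_exp_density_except) auto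
  have nonneg: "0 \<le> indicator E \<omega> * (k (\<omega> i) * exp_density_except i \<omega>)" for \<omega>
    using k(2) by simp
  show "integrable lborel5 (\<lambda>\<omega>. indicator E \<omega> * (k (\<omega> i) * exp_density_except i \<omega>))"
    using meas nonneg eq finite by (intro integrableI_nonneg) auto
  show "integrable lborel (\<lambda>s. k s * p s)"
    using kp_nonneg finite by (intro integrableI_nonneg) auto
  show "(\<integral>\<omega>. indicator E \<omega> * (k (\<omega> i) * exp_density_except i \<omega>) \<partial>lborel5) = (\<integral>s. k s * p s \<partial>lborel)"
    using eq meas nonneg kp_nonneg by (simp add: integral_eq_nn_integral)
qed

lemma integral_disintegrate_coordinate:
  assumes i: "i < 5" and E: "E \<in> sets lborel5"
    and k: "integrable lborel k" "\<And>x. x < 0 \<Longrightarrow> k x = 0"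
    and p: "p \<in> borel_measurable borel" "\<And>s. 0 \<le> s \<Longrightarrow> 0 \<le> p s" "\<And>s. 0 \<le> s \<Longrightarrow> p s \<le> 1"
      "\<And>s. 0 \<le> s \<Longrightarrow> exp_cond_prob E i s = ennreal (p s)"
  shows "integrable lborel5 (\<lambda>\<omega>. indicator E \<omega> * (k (\<omega> i) * exp_density_except i \<omega>))"
    and "integrable lborel (\<lambda>s. k s * p s)"
    and "(\<integral>\<omega>. indicator E \<omega> * (k (\<omega> i) * exp_density_except i \<omega>) \<partial>lborel5) = (\<integral>s. k s * p s \<partial>lborel)"
proof -
  define kp where "kp x = max (k x) 0" for x
  define kn where "kn x = max (- k x) 0" for x
  have kp: "integrable lborel kp" and kn: "integrable lborel kn"
    unfolding kp_def kn_def using k(1) by (auto intro!: integrable_max)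
  have P: "integrable lborel5 (\<lambda>\<omega>. indicator E \<omega> * (kp (\<omega> i) * exp_density_except i \<omega>))"
      "integrable lborel (\<lambda>s. kp s * p s)"
      "(\<integral>\<omega>. indicator E \<omega> * (kp (\<omega> i) * exp_density_except i \<omega>) \<partial>lborel5) = (\<integral>s. kp s * p s \<partial>lborel)"
    by (rule integral_disintegrate_coordinate_nonneg[OF i E kp _ _ p]; simp add: kp_def k(2))+
  have N: "integrable lborel5 (\<lambda>\<omega>. indicator E \<omega> * (kn (\<omega> i) * exp_density_except i \<omega>))"
      "integrable lborel (\<lambda>s. kn s * p s)"
      "(\<integral>\<omega>. indicator E \<omega> * (kn (\<omega> i) * exp_density_except i \<omega>) \<partial>lborel5) = (\<integral>s. kn s * p s \<partial>lborel)"
    by (rule integral_disintegrate_coordinate_nonneg[OF i E kn _ _ p]; simp add: kn_def k(2))+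
  have k_eq: "k x = kp x - kn x" for x
    by (simp add: kp_def kn_def max_def)
  have eq5: "(\<lambda>\<omega>. indicator E \<omega> * (k (\<omega> i) * exp_density_except i \<omega>))
      = (\<lambda>\<omega>. indicator E \<omega> * (kp (\<omega> i) * exp_density_except i \<omega>) - indicator E \<omega> * (kn (\<omega> i) * exp_density_except i \<omega>))"
    by (simp add: k_eq algebra_simps)
  have eq1: "(\<lambda>s. k s * p s) = (\<lambda>s. kp s * p s - kn s * p s)"
    by (simp add: k_eq algebra_simps)
  show "integrable lborel5 (\<lambda>\<omega>. indicator E \<omega> * (k (\<omega> i) * exp_density_except i \<omega>))"
    unfolding eq5 using P N by auto
  show "integrable lborel (\<lambda>s. k s * p s)"
    unfolding eq1 using P N by auto
  show "(\<integral>\<omega>. indicator E \<omega> * (k (\<omega> i) * exp_density_except i \<omega>) \<partial>lborel5) = (\<integral>s. k s * p s \<partial>lborel)"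
    unfolding eq5 eq1 using P N by (simp add: integral_diff)
qed

lemma integral_indicator_score:
  assumes E: "E \<in> sets lborel5"
    and h: "integrable lborel h" "\<And>x. x < 0 \<Longrightarrow> h x = 0"
    and p: "\<And>i. i < 5 \<Longrightarrow> p i \<in> borel_measurable borel"
      "\<And>i s. i < 5 \<Longrightarrow> 0 \<le> s \<Longrightarrow> 0 \<le> p i s" "\<And>i s. i < 5 \<Longrightarrow> 0 \<le> s \<Longrightarrow> p i s \<le> 1"
      "\<And>i s. i < 5 \<Longrightarrow> 0 \<le> s \<Longrightarrow> exp_cond_prob E i s = ennreal (p i s)"
  shows "integrable lborel (\<lambda>s. h s * (\<Sum>i<5. p i s))"
    and "(\<integral>\<omega>. indicator E \<omega> * (\<Sum>i<5. h (\<omega> i) * exp_density_except i \<omega>) \<partial>lborel5)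
      = (\<integral>s. h s * (\<Sum>i<5. p i s) \<partial>lborel)"
proof -
  note D = integral_disintegrate_coordinate[OF _ E h p(1-4)]
  show "integrable lborel (\<lambda>s. h s * (\<Sum>i<5. p i s))"
    unfolding sum_distrib_left by (intro Bochner_Integration.integrable_sum D(2)) auto
  have "(\<integral>\<omega>. indicator E \<omega> * (\<Sum>i<5. h (\<omega> i) * exp_density_except i \<omega>) \<partial>lborel5)
      = (\<Sum>i<5. \<integral>\<omega>. indicator E \<omega> * (h (\<omega> i) * exp_density_except i \<omega>) \<partial>lborel5)"
    unfolding sum_distrib_left by (intro Bochner_Integration.integral_sum D(1)) auto
  also have "\<dots> = (\<Sum>i<5. \<integral>s. h s * p i s \<partial>lborel)"
    using D(3) by simp
  also have "\<dots> = (\<integral>s. h s * (\<Sum>i<5. p i s) \<partial>lborel)"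
    using D(2) by (simp add: sum_distrib_left)
  finally show "(\<integral>\<omega>. indicator E \<omega> * (\<Sum>i<5. h (\<omega> i) * exp_density_except i \<omega>) \<partial>lborel5)
      = (\<integral>s. h s * (\<Sum>i<5. p i s) \<partial>lborel)" .
qed

lemma emeasure_exp_sample:
  assumes E: "E \<in> sets lborel5" and p: "\<And>s. 0 \<le> s \<Longrightarrow> exp_cond_prob E 0 s = ennreal (p s)"
  shows "emeasure (density lborel5 (\<lambda>\<omega>. \<Prod>j<5. ennreal (exp_density (\<omega> j)))) E
    = (\<integral>\<^sup>+s. ennreal (exp_density s * p s) \<partial>lborel)"
proof -
  have "(\<Prod>j<5. ennreal (exp_density (\<omega> j))) = ennreal (exp_density (\<omega> 0) * exp_density_except 0 \<omega>)" for \<omega>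
    unfolding exp_density_except_def prod_ennreal[OF exp_density_nonneg]
    by (subst prod.remove[of _ 0]) auto
  then have "emeasure (density lborel5 (\<lambda>\<omega>. \<Prod>j<5. ennreal (exp_density (\<omega> j)))) E
      = (\<integral>\<^sup>+\<omega>. ennreal (indicator E \<omega> * (exp_density (\<omega> 0) * exp_density_except 0 \<omega>)) \<partial>lborel5)"
    using E by (subst emeasure_density) (auto intro!: nn_integral_cong simp: indicator_def)
  also have "\<dots> = (\<integral>\<^sup>+s. ennreal (exp_density s * p s) \<partial>lborel)"
    by (rule nn_integral_disintegrate_coordinate[OF _ E _ _ _ p]) (auto simp: exp_density_def)
  finally show ?thesis .
qed

subsection \<open>Medians of exponential variables\<close>

lemma med3_commute: "med3 a b c = med3 b a c"
  by (auto simp: med3_def max_def min_def)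

lemma med3_commute_right: "med3 a b c = med3 a c b"
  by (auto simp: med3_def max_def min_def)

lemma borel_measurable_med3 [measurable]:
  "f \<in> borel_measurable M \<Longrightarrow> g \<in> borel_measurable M \<Longrightarrow> h \<in> borel_measurable M
    \<Longrightarrow> (\<lambda>x. med3 (f x) (g x) (h x)) \<in> borel_measurable M"
  unfolding med3_def by (intro borel_measurable_max borel_measurable_min) auto

lemma med3_less_indicator:
  "(if med3 a b c < d then 1 else 0 :: real) =
     indicator {..<d} a * indicator {..<d} b + indicator {..<d} a * indicator {d..} b * indicator {..<d} c
     + indicator {d..} a * indicator {..<d} b * indicator {..<d} c"
  by (auto simp: med3_def max_def min_def indicator_def)

lemma med3_less_indicator_first:
  "(if med3 s a b < d then 1 else 0 :: real) =
     (if s < d then indicator {..<d} a + indicator {d..} a * indicator {..<d} b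
      else indicator {..<d} a * indicator {..<d} b)"
  by (auto simp: med3_def max_def min_def indicator_def)

definition exp_med3_cdf :: "real \<Rightarrow> real" where
  "exp_med3_cdf c = 3 * exp_cdf c ^ 2 - 2 * exp_cdf c ^ 3"

lemma exp_med3_cdf_eq: "0 \<le> c \<Longrightarrow> exp_med3_cdf c = (1 - exp (-c))^2 * (1 + 2 * exp (-c))"
  by (simp add: exp_med3_cdf_def exp_cdf_def algebra_simps power2_eq_square power3_eq_cube)

lemma exp_med3_cdf_nonpos: "c \<le> 0 \<Longrightarrow> exp_med3_cdf c = 0"
  by (simp add: exp_med3_cdf_def exp_cdf_def)

lemma nn_integral_med3_exp_less:
  "(\<integral>\<^sup>+x. ennreal ((if med3 (x 1) (x 2) (x 3) < c then 1 else 0)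
      * (exp_density (x 1) * (exp_density (x 2) * exp_density (x 3)))) \<partial>PiM {1,2,3::nat} (\<lambda>_. lborel))
    = ennreal (exp_med3_cdf c)"
proof -
  let ?M = "PiM {1,2,3::nat} (\<lambda>_. lborel::real measure)"
  let ?lt = "exp_density_lt c" and ?ge = "exp_density_ge c"
  have "(\<integral>\<^sup>+x. ennreal ((if med3 (x 1) (x 2) (x 3) < c then 1 else 0)
      * (exp_density (x 1) * (exp_density (x 2) * exp_density (x 3)))) \<partial>?M)
    = (\<integral>\<^sup>+x. ennreal (?lt (x 1) * ?lt (x 2) * exp_density (x 3)) + ennreal (?lt (x 1) * ?ge (x 2) * ?lt (x 3))
         + ennreal (?ge (x 1) * ?lt (x 2) * ?lt (x 3)) \<partial>?M)"
    by (intro nn_integral_cong)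
       (simp add: med3_less_indicator exp_density_lt_def exp_density_ge_def ennreal_plus[symmetric]
          algebra_simps del: ennreal_plus)
  also have "\<dots> = (\<integral>\<^sup>+x. ennreal (?lt (x 1) * ?lt (x 2) * exp_density (x 3)) \<partial>?M)
      + (\<integral>\<^sup>+x. ennreal (?lt (x 1) * ?ge (x 2) * ?lt (x 3)) \<partial>?M)
      + (\<integral>\<^sup>+x. ennreal (?ge (x 1) * ?lt (x 2) * ?lt (x 3)) \<partial>?M)"
    by (subst nn_integral_add, measurable, subst nn_integral_add, measurable)
  also have "\<dots> = ennreal (exp_cdf c) * ennreal (exp_cdf c) * 1
      + ennreal (exp_cdf c) * ennreal (1 - exp_cdf c) * ennreal (exp_cdf c)
      + ennreal (1 - exp_cdf c) * ennreal (exp_cdf c) * ennreal (exp_cdf c)"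
    by (simp add: nn_integral_PiM_lborel_triple nn_integral_exp_density_lt nn_integral_exp_density_ge
        nn_integral_exp_density)
  also have "\<dots> = ennreal (exp_med3_cdf c)"
    by (simp add: exp_med3_cdf_def ennreal_mult'[symmetric] ennreal_plus[symmetric] del: ennreal_plus)
       (simp add: algebra_simps power2_eq_square power3_eq_cube)
  finally show ?thesis .
qed

definition exp_med3_fixed_cdf :: "real \<Rightarrow> real \<Rightarrow> real" where
  "exp_med3_fixed_cdf s c = (if s < c then 1 - (1 - exp_cdf c) ^ 2 else exp_cdf c ^ 2)"

lemma nn_integral_med3_fixed_exp_less:
  assumes "j \<noteq> k"
  shows "(\<integral>\<^sup>+x. ennreal ((if med3 s (x j) (x k) < c then 1 else 0) * (exp_density (x j) * exp_density (x k)))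
      \<partial>PiM {j,k} (\<lambda>_. lborel)) = ennreal (exp_med3_fixed_cdf s c)"
proof -
  let ?M = "PiM {j,k} (\<lambda>_. lborel::real measure)"
  let ?lt = "exp_density_lt c" and ?ge = "exp_density_ge c"
  show ?thesis
  proof (cases "s < c")
    case True
    have "(\<integral>\<^sup>+x. ennreal ((if med3 s (x j) (x k) < c then 1 else 0) * (exp_density (x j) * exp_density (x k))) \<partial>?M)
      = (\<integral>\<^sup>+x. ennreal (?lt (x j) * exp_density (x k)) + ennreal (?ge (x j) * ?lt (x k)) \<partial>?M)"
      using True
      by (intro nn_integral_cong) (simp add: med3_less_indicator_first exp_density_lt_def exp_density_ge_def
          ennreal_plus[symmetric] algebra_simps del: ennreal_plus)
    also have "\<dots> = (\<integral>\<^sup>+x. ennreal (?lt (x j) * exp_density (x k)) \<partial>?M) + (\<integral>\<^sup>+x. ennreal (?ge (x j) * ?lt (x k)) \<partial>?M)"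
      by (subst nn_integral_add, measurable)
    also have "\<dots> = ennreal (exp_cdf c) * 1 + ennreal (1 - exp_cdf c) * ennreal (exp_cdf c)"
      using assms by (simp add: nn_integral_PiM_lborel_pair nn_integral_exp_density_lt
          nn_integral_exp_density_ge nn_integral_exp_density)
    also have "\<dots> = ennreal (exp_med3_fixed_cdf s c)"
      using True by (simp add: exp_med3_fixed_cdf_def ennreal_mult'[symmetric] ennreal_plus[symmetric] del: ennreal_plus)
         (simp add: algebra_simps power2_eq_square)
    finally show ?thesis .
  next
    case False
    have "(\<integral>\<^sup>+x. ennreal ((if med3 s (x j) (x k) < c then 1 else 0) * (exp_density (x j) * exp_density (x k))) \<partial>?M)
      = (\<integral>\<^sup>+x. ennreal (?lt (x j) * ?lt (x k)) \<partial>?M)"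
      using False by (intro nn_integral_cong)
        (simp add: med3_less_indicator_first exp_density_lt_def exp_density_ge_def algebra_simps)
    also have "\<dots> = ennreal (exp_cdf c) * ennreal (exp_cdf c)"
      using assms by (simp add: nn_integral_PiM_lborel_pair nn_integral_exp_density_lt)
    also have "\<dots> = ennreal (exp_med3_fixed_cdf s c)"
      using False by (simp add: exp_med3_fixed_cdf_def ennreal_mult'[symmetric] power2_eq_square)
    finally show ?thesis .
  qed
qed

subsection \<open>Conditional probabilities of the event \<open>max(X\<^sub>2, X\<^sub>3, X\<^sub>4) < X\<^sub>5\<close>\<close>

lemma exp_cond_prob_evA_0: "exp_cond_prob evA 0 s = ennreal (1/4)"
proof -
  have I: "{..<5::nat} - {0} = insert 4 {1,2,3}" by auto
  have "exp_cond_prob evA 0 s = (\<integral>\<^sup>+x. ennreal ((if max (x 1) (max (x 2) (x 3)) < x 4 then 1 else 0)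
      * (exp_density (x 4) * (exp_density (x 1) * (exp_density (x 2) * exp_density (x 3)))))
      \<partial>PiM (insert 4 {1,2,3::nat}) (\<lambda>_. lborel))"
    unfolding exp_cond_prob_def I by (intro nn_integral_cong) (simp add: evA_def exp_density_except_eq indicator_def)
  also have "\<dots> = (\<integral>\<^sup>+ t. (\<integral>\<^sup>+ x. ennreal (exp_density t) * ennreal (\<Prod>j\<in>{1,2,3::nat}. exp_density_lt t (x j))
      \<partial>PiM {1,2,3::nat} (\<lambda>_. lborel)) \<partial>lborel)"
    by (subst nn_integral_PiM_insert_lborel)
       (auto intro!: nn_integral_cong simp: ennreal_mult[symmetric] exp_density_lt_def indicator_def)
  also have "\<dots> = (\<integral>\<^sup>+ t. ennreal (exp_density t) * (\<Prod>j\<in>{1,2,3::nat}. ennreal (exp_cdf t)) \<partial>lborel)"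
  proof (intro nn_integral_cong)
    fix t :: real
    have "(\<integral>\<^sup>+ x. ennreal (\<Prod>j\<in>{1,2,3::nat}. exp_density_lt t (x j)) \<partial>PiM {1,2,3::nat} (\<lambda>_. lborel))
        = (\<Prod>j\<in>{1,2,3::nat}. ennreal (exp_cdf t))"
      using nn_integral_PiM_lborel_prod[of "{1,2,3::nat}" "\<lambda>j. exp_density_lt t"]
      by (simp add: nn_integral_exp_density_lt)
    then show "(\<integral>\<^sup>+ x. ennreal (exp_density t) * ennreal (\<Prod>j\<in>{1,2,3::nat}. exp_density_lt t (x j))
        \<partial>PiM {1,2,3::nat} (\<lambda>_. lborel)) = ennreal (exp_density t) * (\<Prod>j\<in>{1,2,3::nat}. ennreal (exp_cdf t))"
      by (subst nn_integral_cmult) (auto simp only:, measurable)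
  qed
  also have "\<dots> = (\<integral>\<^sup>+ t. ennreal (exp (-t) * (1 - exp (-t))^3 * indicator {0..} t) \<partial>lborel)"
    by (intro nn_integral_cong)
       (auto simp: exp_density_def exp_cdf_def ennreal_mult[symmetric] prod_ennreal power3_eq_cube split: split_indicator)
  also have "\<dots> = ennreal (1/4 - (1 - exp (- 0))^4/4)"
    by (rule nn_integral_FTC_atLeast_indicator[where F="\<lambda>t. (1 - exp (-t))^4/4"])
       (auto intro!: derivative_eq_intros simp: power3_eq_cube, real_asymp)
  finally show ?thesis by simp
qed

lemma exp_cond_prob_evA_4:
  assumes "0 \<le> s"
  shows "exp_cond_prob evA 4 s = ennreal ((1 - exp (-s))^3)"
proof -
  have I: "{..<5::nat} - {4} = {0,1,2,3}" by auto
  define F where "F j = (if j = (0::nat) then exp_density else exp_density_lt s)" for j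
  have "exp_cond_prob evA 4 s = (\<integral>\<^sup>+x. ennreal (\<Prod>j\<in>{0,1,2,3}. F j (x j)) \<partial>PiM {0,1,2,3} (\<lambda>_. lborel))"
    unfolding exp_cond_prob_def I
    by (intro nn_integral_cong) (auto simp: evA_def exp_density_except_eq F_def exp_density_lt_def indicator_def)
  also have "\<dots> = (\<Prod>j\<in>{0,1,2,3::nat}. \<integral>\<^sup>+ x. ennreal (F j x) \<partial>lborel)"
    by (rule nn_integral_PiM_lborel_prod) (auto simp: F_def)
  also have "\<dots> = ennreal ((1 - exp (-s))^3)"
    using assms by (simp add: F_def nn_integral_exp_density nn_integral_exp_density_lt exp_cdf_def prod_ennreal
        power3_eq_cube ennreal_mult'[symmetric])
  finally show ?thesis .
qed

lemma nn_integral_exp_density_greater_cdf_sq: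
  assumes "0 \<le> s"
  shows "(\<integral>\<^sup>+t. ennreal (exp_density t * indicator {s<..} t) * ennreal (exp_cdf t * exp_cdf t) \<partial>lborel)
    = ennreal (exp (-s) - exp (-s)^2 + exp (-s)^3/3)"
proof -
  have "(\<integral>\<^sup>+t. ennreal (exp_density t * indicator {s<..} t) * ennreal (exp_cdf t * exp_cdf t) \<partial>lborel)
      = (\<integral>\<^sup>+t. ennreal (exp (-t) * (1 - exp (-t))^2 * indicator {s..} t) \<partial>lborel)"
    by (intro nn_integral_cong_AE, rule AE_I'[where N="{s}"])
       (use assms in \<open>auto simp: exp_density_def exp_cdf_def ennreal_mult'[symmetric] power2_eq_square
          split: split_indicator\<close>)
  also have "\<dots> = ennreal (0 - (- exp (-s) + exp (-s)^2 - exp (-s)^3/3))"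
  proof (rule nn_integral_FTC_atLeast_indicator[where F="\<lambda>t. - exp (-t) + exp (-t)^2 - exp (-t)^3/3"])
    fix t :: real
    show "((\<lambda>t. - exp (-t) + exp (-t)^2 - exp (-t)^3/3) has_real_derivative exp (-t) * (1 - exp (-t))^2) (at t)"
      by (rule derivative_eq_intros refl | simp)+ (simp add: power2_eq_square power3_eq_cube algebra_simps)
  qed (auto, real_asymp)
  finally show ?thesis by (simp add: algebra_simps)
qed

lemma exp_density_except_middle:
  assumes "(i,j,k) \<in> {(1::nat,2::nat,3::nat),(2,1,3),(3,1,2)}"
  shows "exp_density_except i x = exp_density (x 0) * (exp_density (x 4) * (exp_density (x j) * exp_density (x k)))"
  using assms exp_density_except_eq(2)[unfolded One_nat_def]
  by (auto simp: exp_density_except_eq algebra_simps)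

lemma exp_cond_prob_evA_middle:
  assumes perm: "(i,j,k) \<in> {(1::nat,2::nat,3::nat),(2,1,3),(3,1,2)}" and s: "0 \<le> s"
  shows "exp_cond_prob evA i s = ennreal (exp (-s) - exp (-s)^2 + exp (-s)^3/3)"
proof -
  have I: "{..<5::nat} - {i} = insert 4 {0,j,k}" using perm by auto
  have d: "j \<noteq> 4" "k \<noteq> 4" "distinct [0,j,k]" using perm by auto
  have "exp_cond_prob evA i s = (\<integral>\<^sup>+x. ennreal ((if s < x 4 \<and> x j < x 4 \<and> x k < x 4 then 1 else 0)
      * (exp_density (x 4) * (exp_density (x 0) * exp_density (x j) * exp_density (x k))))
      \<partial>PiM (insert 4 {0,j,k}) (\<lambda>_. lborel))"
    unfolding exp_cond_prob_def I[symmetric] using perm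
    by (intro nn_integral_cong) (auto simp: evA_def exp_density_except_middle[OF perm] indicator_def)
  also have "\<dots> = (\<integral>\<^sup>+t. \<integral>\<^sup>+x. ennreal (exp_density t * indicator {s<..} t)
      * ennreal (exp_density (x 0) * exp_density_lt t (x j) * exp_density_lt t (x k))
      \<partial>PiM {0,j,k} (\<lambda>_. lborel) \<partial>lborel)"
    by (subst nn_integral_PiM_insert_lborel)
       (use d in \<open>auto intro!: nn_integral_cong simp: exp_density_lt_def ennreal_mult'[symmetric] indicator_def\<close>)
  also have "\<dots> = (\<integral>\<^sup>+t. ennreal (exp_density t * indicator {s<..} t) * ennreal (exp_cdf t * exp_cdf t) \<partial>lborel)"
    by (intro nn_integral_cong, subst nn_integral_cmult)
       (use d in \<open>auto simp: nn_integral_PiM_lborel_triple nn_integral_exp_density nn_integral_exp_density_lt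
          ennreal_mult'[symmetric]\<close>)
  also have "\<dots> = ennreal (exp (-s) - exp (-s)^2 + exp (-s)^3/3)"
    by (rule nn_integral_exp_density_greater_cdf_sq[OF s])
  finally show ?thesis .
qed

subsection \<open>Conditional probabilities of the event \<open>X\<^sub>1 + med(X\<^sub>2, X\<^sub>3, X\<^sub>4) < X\<^sub>5\<close>\<close>

lemma nn_integral_exp_med3_cdf_sub:
  assumes s: "0 \<le> s"
  shows "(\<integral>\<^sup>+t. ennreal (exp_density t) * ennreal (exp_med3_cdf (t - s)) \<partial>lborel) = ennreal (exp (-s) / 2)"
proof -
  define b where "b = exp s"
  have "(\<integral>\<^sup>+t. ennreal (exp_density t) * ennreal (exp_med3_cdf (t - s)) \<partial>lborel)
      = (\<integral>\<^sup>+t. ennreal (exp (-t) * ((1 - b * exp (-t))^2 * (1 + 2 * b * exp (-t))) * indicator {s..} t) \<partial>lborel)"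
  proof (intro nn_integral_cong)
    fix t :: real
    have "exp (- (t - s)) = b * exp (-t)"
      by (simp add: b_def flip: exp_add)
    moreover have "0 \<le> t" if "s \<le> t"
      using s that by linarith
    ultimately show "ennreal (exp_density t) * ennreal (exp_med3_cdf (t - s))
        = ennreal (exp (-t) * ((1 - b * exp (-t))^2 * (1 + 2 * b * exp (-t))) * indicator {s..} t)"
      by (cases "s \<le> t") (simp_all add: exp_density_def exp_med3_cdf_eq exp_med3_cdf_nonpos ennreal_mult'[symmetric] mult.assoc)
  qed
  also have "\<dots> = ennreal (0 - (- exp (-s) + b^2 * exp (-s)^3 - b^3 * exp (-s)^4 / 2))"
  proof (rule nn_integral_FTC_atLeast_indicator[where F="\<lambda>t. - exp (-t) + b^2 * exp (-t)^3 - b^3 * exp (-t)^4 / 2"])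
    fix t :: real
    show "((\<lambda>t. - exp (-t) + b^2 * exp (-t)^3 - b^3 * exp (-t)^4 / 2) has_real_derivative
        exp (-t) * ((1 - b * exp (-t))^2 * (1 + 2 * b * exp (-t)))) (at t)"
      by (rule derivative_eq_intros refl | simp)+ (simp add: power2_eq_square power3_eq_cube algebra_simps eval_nat_numeral)
  next
    fix t :: real
    show "0 \<le> exp (-t) * ((1 - b * exp (-t))^2 * (1 + 2 * b * exp (-t)))"
      unfolding b_def by (intro mult_nonneg_nonneg) (auto intro: add_nonneg_nonneg)
  qed (unfold b_def, measurable, real_asymp)
  also have "\<dots> = ennreal (exp (-s) / 2)"
  proof -
    have ba: "b * exp (-s) = 1" unfolding b_def by (simp add: exp_minus)
    have "b^2 * exp (-s)^3 = (b * exp (-s))^2 * exp (-s)" by (simp add: power2_eq_square power3_eq_cube)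
    moreover have "b^3 * exp (-s)^4 = (b * exp (-s))^3 * exp (-s)" by (simp add: power3_eq_cube eval_nat_numeral)
    ultimately show ?thesis by (simp add: ba)
  qed
  finally show ?thesis .
qed

lemma nn_integral_exp_med3_cdf_sub_rev:
  assumes s: "0 \<le> s"
  shows "(\<integral>\<^sup>+u. ennreal (exp_density u) * ennreal (exp_med3_cdf (s - u)) \<partial>lborel) = ennreal ((1 - exp (-s))^3)"
proof -
  define c where "c = exp (-s)"
  have pt: "ennreal (exp_density u) * ennreal (exp_med3_cdf (s - u))
      = ennreal (exp (-u) * ((1 - c * exp u)^2 * (1 + 2 * c * exp u)) * indicator {0..s} u)" if "u \<noteq> s" for u
  proof -
    have "exp (- (s - u)) = c * exp u"
      by (simp add: c_def flip: exp_add)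
    then show ?thesis
      using that by (cases "0 \<le> u \<and> u \<le> s")
        (auto simp: exp_density_def exp_med3_cdf_eq exp_med3_cdf_nonpos ennreal_mult'[symmetric] mult.assoc)
  qed
  have "(\<integral>\<^sup>+u. ennreal (exp_density u) * ennreal (exp_med3_cdf (s - u)) \<partial>lborel)
      = (\<integral>\<^sup>+u. ennreal (exp (-u) * ((1 - c * exp u)^2 * (1 + 2 * c * exp u)) * indicator {0..s} u) \<partial>lborel)"
    by (intro nn_integral_cong_AE eventually_mono[OF AE_lborel_singleton[of s]]) (rule pt)
  also have "\<dots> = ennreal ((- exp (-s) - 3 * c^2 * exp s + c^3 * exp s ^ 2) - (- exp (-0) - 3 * c^2 * exp 0 + c^3 * exp 0 ^ 2))"
  proof (rule nn_integral_FTC_Icc_indicator[where F="\<lambda>u. - exp (-u) - 3 * c^2 * exp u + c^3 * exp u ^ 2"])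
    fix u :: real
    have eu: "exp (-u) * exp u = 1" by (simp add: exp_minus)
    have "exp (-u) * ((1 - c * exp u)^2 * (1 + 2 * c * exp u)) = exp (-u) - 3 * c^2 * (exp (-u) * exp u) * exp u + 2 * c^3 * (exp (-u) * exp u) * exp u ^ 2"
      by (simp add: power2_eq_square power3_eq_cube algebra_simps)
    also have "\<dots> = exp (-u) - 3 * c^2 * exp u + 2 * c^3 * exp u ^ 2" by (simp add: eu)
    finally have fe: "exp (-u) * ((1 - c * exp u)^2 * (1 + 2 * c * exp u)) = exp (-u) - 3 * c^2 * exp u + 2 * c^3 * exp u ^ 2" .
    show "((\<lambda>u. - exp (-u) - 3 * c^2 * exp u + c^3 * exp u ^ 2) has_real_derivative
        exp (-u) * ((1 - c * exp u)^2 * (1 + 2 * c * exp u))) (at u)"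
      unfolding fe by (rule derivative_eq_intros refl | simp)+ (simp add: power2_eq_square algebra_simps)
  next
    fix u :: real
    show "0 \<le> exp (-u) * ((1 - c * exp u)^2 * (1 + 2 * c * exp u))"
      unfolding c_def by (intro mult_nonneg_nonneg) (auto intro: add_nonneg_nonneg)
  qed (use s in \<open>unfold c_def, measurable\<close>)
  also have "\<dots> = ennreal ((1 - exp (-s))^3)"
  proof -
    have cs: "c * exp s = 1" unfolding c_def by (simp add: exp_minus)
    have h1: "c^2 * exp s = c" using cs by (simp add: power2_eq_square mult.assoc)
    have h2: "c^3 * exp s ^ 2 = c"
    proof -
      have "c^3 * exp s ^ 2 = c * (c * exp s) * (c * exp s)" by (simp add: power2_eq_square power3_eq_cube algebra_simps)
      then show ?thesis using cs by simp
    qed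
    have "(- exp (-s) - 3 * c^2 * exp s + c^3 * exp s ^ 2) - (- exp (-0) - 3 * c^2 * exp 0 + c^3 * exp 0 ^ 2)
        = (- c - 3 * (c^2 * exp s) + (c^3 * exp s ^ 2)) - (- 1 - 3 * c^2 + c^3)" by (simp add: c_def)
    also have "\<dots> = (1 - c)^3" unfolding h1 h2 by (simp add: algebra_simps power2_eq_square power3_eq_cube)
    finally show ?thesis by (simp add: c_def)
  qed
  finally show ?thesis .
qed

lemma exp_cond_prob_evB_0:
  assumes s: "0 \<le> s"
  shows "exp_cond_prob evB 0 s = ennreal (exp (-s)/2)"
proof -
  have I: "{..<5::nat} - {0} = insert 4 {1,2,3}" by auto
  have "exp_cond_prob evB 0 s = (\<integral>\<^sup>+x. ennreal ((if med3 (x 1) (x 2) (x 3) < x 4 - s then 1 else 0)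
      * (exp_density (x 4) * (exp_density (x 1) * (exp_density (x 2) * exp_density (x 3)))))
      \<partial>PiM (insert 4 {1,2,3::nat}) (\<lambda>_. lborel))"
    unfolding exp_cond_prob_def I
    by (intro nn_integral_cong) (auto simp: evB_def exp_density_except_eq indicator_def algebra_simps)
  also have "\<dots> = (\<integral>\<^sup>+ t. (\<integral>\<^sup>+ x. ennreal (exp_density t) * ennreal ((if med3 (x 1) (x 2) (x 3) < t - s then 1 else 0)
      * (exp_density (x 1) * (exp_density (x 2) * exp_density (x 3)))) \<partial>PiM {1,2,3::nat} (\<lambda>_. lborel)) \<partial>lborel)"
    by (subst nn_integral_PiM_insert_lborel) (auto intro!: nn_integral_cong simp: ennreal_mult'[symmetric])
  also have "\<dots> = (\<integral>\<^sup>+t. ennreal (exp_density t) * ennreal (exp_med3_cdf (t - s)) \<partial>lborel)"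
    by (intro nn_integral_cong, subst nn_integral_cmult) (auto simp: nn_integral_med3_exp_less[unfolded One_nat_def])
  also have "\<dots> = ennreal (exp (-s)/2)" by (rule nn_integral_exp_med3_cdf_sub[OF s])
  finally show ?thesis .
qed

lemma exp_cond_prob_evB_4:
  assumes s: "0 \<le> s"
  shows "exp_cond_prob evB 4 s = ennreal ((1 - exp (-s))^3)"
proof -
  have I: "{..<5::nat} - {4} = insert 0 {1,2,3}" by auto
  have "exp_cond_prob evB 4 s = (\<integral>\<^sup>+x. ennreal ((if med3 (x 1) (x 2) (x 3) < s - x 0 then 1 else 0)
      * (exp_density (x 0) * (exp_density (x 1) * (exp_density (x 2) * exp_density (x 3)))))
      \<partial>PiM (insert 0 {1,2,3::nat}) (\<lambda>_. lborel))"
    unfolding exp_cond_prob_def I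
    by (intro nn_integral_cong) (auto simp: evB_def exp_density_except_eq indicator_def algebra_simps)
  also have "\<dots> = (\<integral>\<^sup>+ u. (\<integral>\<^sup>+ x. ennreal (exp_density u) * ennreal ((if med3 (x 1) (x 2) (x 3) < s - u then 1 else 0)
      * (exp_density (x 1) * (exp_density (x 2) * exp_density (x 3)))) \<partial>PiM {1,2,3::nat} (\<lambda>_. lborel)) \<partial>lborel)"
    by (subst nn_integral_PiM_insert_lborel) (auto intro!: nn_integral_cong simp: ennreal_mult'[symmetric])
  also have "\<dots> = (\<integral>\<^sup>+u. ennreal (exp_density u) * ennreal (exp_med3_cdf (s - u)) \<partial>lborel)"
    by (intro nn_integral_cong, subst nn_integral_cmult) (auto simp: nn_integral_med3_exp_less[unfolded One_nat_def])
  also have "\<dots> = ennreal ((1 - exp (-s))^3)" by (rule nn_integral_exp_med3_cdf_sub_rev[OF s])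
  finally show ?thesis .
qed

lemma nn_integral_exp_one_minus_exp_sq_Icc:
  assumes "0 \<le> s"
  shows "(\<integral>\<^sup>+t. ennreal (exp (-t) * (1 - exp (u - t))^2 * indicator {u..u+s} t) \<partial>lborel)
    = ennreal (exp (-u) * (1 - exp (-s))^3 / 3)"
proof -
  define F where "F t = - exp (-t) + exp (-t) * exp (u - t) - exp (-t) * exp (u - t)^2 / 3" for t
  have "(\<integral>\<^sup>+t. ennreal (exp (-t) * (1 - exp (u - t))^2 * indicator {u..u+s} t) \<partial>lborel) = ennreal (F (u+s) - F u)"
  proof (rule nn_integral_FTC_Icc_indicator)
    fix t :: real
    show "(F has_real_derivative exp (-t) * (1 - exp (u - t))^2) (at t)"
      unfolding F_def by (rule derivative_eq_intros refl | simp)+ (simp add: power2_eq_square algebra_simps)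
  qed (use assms in auto)
  also have "F (u+s) - F u = exp (-u) * (1 - exp (-s))^3 / 3"
  proof -
    have "exp (- (u + s)) = exp (-u) * exp (-s)" "exp (u - (u + s)) = exp (-s)"
      by (simp_all flip: exp_add)
    then show ?thesis
      unfolding F_def by (simp add: power2_eq_square power3_eq_cube algebra_simps)
  qed
  finally show ?thesis .
qed

lemma nn_integral_exp_one_minus_exp_sq_atLeast:
  assumes "0 \<le> s"
  shows "(\<integral>\<^sup>+t. ennreal (exp (-t) * (1 - exp (u - t)^2) * indicator {u+s..} t) \<partial>lborel)
    = ennreal (exp (-u) * exp (-s) * (1 - exp (-s)^2 / 3))"
proof -
  define F where "F t = - exp (-t) + exp (-t) * exp (u - t)^2 / 3" for t
  have "(\<integral>\<^sup>+t. ennreal (exp (-t) * (1 - exp (u - t)^2) * indicator {u+s..} t) \<partial>lborel) = ennreal (0 - F (u+s))"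
  proof (rule nn_integral_FTC_atLeast_indicator)
    fix t :: real
    show "(F has_real_derivative exp (-t) * (1 - exp (u - t)^2)) (at t)"
      unfolding F_def by (rule derivative_eq_intros refl | simp)+ (simp add: power2_eq_square algebra_simps)
  next
    fix t :: real
    assume "u + s \<le> t"
    then have "exp (u - t)^2 \<le> 1"
      using assms by (simp add: power_le_one)
    then show "0 \<le> exp (-t) * (1 - exp (u - t)^2)"
      by simp
  next
    show "(F \<longlongrightarrow> 0) at_top"
      unfolding F_def by real_asymp
  qed simp
  also have "0 - F (u+s) = exp (-u) * exp (-s) * (1 - exp (-s)^2 / 3)"
  proof -
    have "exp (- (u + s)) = exp (-u) * exp (-s)" "exp (u - (u + s)) = exp (-s)"
      by (simp_all flip: exp_add)
    then show ?thesis
      unfolding F_def by (simp add: power2_eq_square algebra_simps)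
  qed
  finally show ?thesis .
qed

lemma nn_integral_exp_med3_fixed_cdf_sub:
  assumes u: "0 \<le> u" and s: "0 \<le> s"
  shows "(\<integral>\<^sup>+t. ennreal (exp_density t) * ennreal (exp_med3_fixed_cdf s (t - u)) \<partial>lborel)
    = ennreal (exp (-u) * (1/3 + exp (-s)^2 - 2 * exp (-s)^3 / 3))"
proof -
  define f1 where "f1 t = exp (-t) * (1 - exp (u - t))^2 * indicator {u..u+s} t" for t
  define f2 where "f2 t = exp (-t) * (1 - exp (u - t)^2) * indicator {u+s..} t" for t
  have pt: "ennreal (exp_density t) * ennreal (exp_med3_fixed_cdf s (t - u)) = ennreal (f1 t) + ennreal (f2 t)"
    if ne: "t \<noteq> u + s" for t
  proof -
    consider "t < u" | "u \<le> t" "t < u + s" | "u + s < t"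
      using ne by linarith
    then show ?thesis
    proof cases
      case 1
      then show ?thesis
        using s by (simp add: exp_med3_fixed_cdf_def exp_cdf_def f1_def f2_def)
    next
      case 2
      then show ?thesis
        using u s by (simp add: exp_med3_fixed_cdf_def exp_cdf_def exp_density_def f1_def f2_def
            ennreal_mult'[symmetric] power2_eq_square)
    next
      case 3
      then show ?thesis
        using u s by (simp add: exp_med3_fixed_cdf_def exp_cdf_def exp_density_def f1_def f2_def
            ennreal_mult'[symmetric] power2_eq_square algebra_simps)
    qed
  qed
  have "(\<integral>\<^sup>+t. ennreal (exp_density t) * ennreal (exp_med3_fixed_cdf s (t - u)) \<partial>lborel)
      = (\<integral>\<^sup>+t. ennreal (f1 t) + ennreal (f2 t) \<partial>lborel)"
    by (intro nn_integral_cong_AE eventually_mono[OF AE_lborel_singleton[of "u+s"]]) (rule pt)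
  also have "\<dots> = (\<integral>\<^sup>+t. ennreal (f1 t) \<partial>lborel) + (\<integral>\<^sup>+t. ennreal (f2 t) \<partial>lborel)"
    by (rule nn_integral_add) (auto simp: f1_def f2_def)
  also have "\<dots> = ennreal (exp (-u) * (1 - exp (-s))^3 / 3) + ennreal (exp (-u) * exp (-s) * (1 - exp (-s)^2 / 3))"
    unfolding f1_def f2_def
    by (simp only: nn_integral_exp_one_minus_exp_sq_Icc[OF s] nn_integral_exp_one_minus_exp_sq_atLeast[OF s])
  also have "\<dots> = ennreal (exp (-u) * (1/3 + exp (-s)^2 - 2 * exp (-s)^3 / 3))"
  proof -
    have "exp (-s)^2 \<le> 1"
      using s by (simp add: power_le_one)
    then have "ennreal (exp (-u) * (1 - exp (-s))^3 / 3) + ennreal (exp (-u) * exp (-s) * (1 - exp (-s)^2 / 3))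
        = ennreal (exp (-u) * (1 - exp (-s))^3 / 3 + exp (-u) * exp (-s) * (1 - exp (-s)^2 / 3))"
      using s by (intro ennreal_plus[symmetric]) auto
    also have "exp (-u) * (1 - exp (-s))^3 / 3 + exp (-u) * exp (-s) * (1 - exp (-s)^2 / 3)
        = exp (-u) * (1/3 + exp (-s)^2 - 2 * exp (-s)^3 / 3)"
      by (simp add: power2_eq_square power3_eq_cube field_simps)
    finally show ?thesis .
  qed
  finally show ?thesis .
qed

lemma nn_integral_exp_iterated_med3_fixed_cdf:
  assumes s: "0 \<le> s"
  shows "(\<integral>\<^sup>+u. ennreal (exp_density u) * (\<integral>\<^sup>+t. ennreal (exp_density t) * ennreal (exp_med3_fixed_cdf s (t - u)) \<partial>lborel) \<partial>lborel)
     = ennreal (1/6 + exp (-s)^2/2 - exp (-s)^3/3)"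
proof -
  define Kc where "Kc = 1/3 + exp (-s)^2 - 2 * exp (-s)^3 / 3"
  define FF where "FF u = - (exp (-u) * exp (-u) * Kc) / 2" for u
  have Kc0: "0 \<le> Kc"
  proof -
    have b: "exp (-s) \<le> 1" "0 \<le> exp (-s)" using s by auto
    have "exp (-s)^3 \<le> exp (-s)^2" using b by (simp add: power_decreasing)
    moreover have "0 \<le> exp (-s)^3" by simp
    ultimately show ?thesis unfolding Kc_def by linarith
  qed
  have "(\<integral>\<^sup>+u. ennreal (exp_density u) * (\<integral>\<^sup>+t. ennreal (exp_density t) * ennreal (exp_med3_fixed_cdf s (t - u)) \<partial>lborel) \<partial>lborel)
     = (\<integral>\<^sup>+u. ennreal (exp (-u) * exp (-u) * Kc * indicator {0..} u) \<partial>lborel)"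
  proof (intro nn_integral_cong)
    fix u :: real
    show "ennreal (exp_density u) * (\<integral>\<^sup>+t. ennreal (exp_density t) * ennreal (exp_med3_fixed_cdf s (t - u)) \<partial>lborel) = ennreal (exp (-u) * exp (-u) * Kc * indicator {0..} u)"
    proof (cases "0 \<le> u")
      case True
      then show ?thesis using Kc0 by (subst nn_integral_exp_med3_fixed_cdf_sub[OF True s]) (simp add: Kc_def[symmetric] exp_density_def ennreal_mult'[symmetric] mult.assoc)
    qed (simp add: exp_density_def)
  qed
  also have "\<dots> = ennreal (0 - FF 0)"
  proof (rule nn_integral_FTC_atLeast_indicator[where F=FF])
    fix u :: real
    show "(FF has_real_derivative exp (-u) * exp (-u) * Kc) (at u)"
      unfolding FF_def by (rule derivative_eq_intros refl | simp)+
  next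
    show "(\<lambda>x. exp (- x) * exp (- x) * Kc) \<in> borel_measurable borel" by measurable
  next
    fix u :: real show "0 \<le> exp (- u) * exp (- u) * Kc" using Kc0 by simp
  next
    show "(FF \<longlongrightarrow> 0) at_top" unfolding FF_def by real_asymp
  qed
  also have "\<dots> = ennreal (1/6 + exp (-s)^2/2 - exp (-s)^3/3)" by (rule arg_cong[where f=ennreal]) (simp add: Kc_def FF_def field_simps)
  finally show ?thesis .
qed

lemma indicator_evB_fun_upd_middle:
  assumes perm: "(i,j,k) \<in> {(1::nat,2::nat,3::nat),(2,1,3),(3,1,2)}"
  shows "indicator evB (x(i:=s)) = (if x 0 + med3 s (x j) (x k) < x 4 then 1 else (0::real))"
proof -
  have "med3 (x 1) s (x 3) = med3 s (x 1) (x 3)" by (rule med3_commute)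
  moreover have "med3 (x 1) (x 2) s = med3 s (x 1) (x 2)" by (metis med3_commute med3_commute_right)
  ultimately show ?thesis using perm by (auto simp: evB_def indicator_def)
qed

lemma nn_integral_shifted_med3_fixed_exp_less:
  assumes "distinct [m, j, k]"
  shows "(\<integral>\<^sup>+x. ennreal ((if u + med3 s (x j) (x k) < x m then 1 else 0)
        * (exp_density (x m) * (exp_density (x j) * exp_density (x k)))) \<partial>PiM (insert m {j,k}) (\<lambda>_. lborel))
    = (\<integral>\<^sup>+t. ennreal (exp_density t) * ennreal (exp_med3_fixed_cdf s (t - u)) \<partial>lborel)"
proof -
  have "(\<integral>\<^sup>+x. ennreal ((if u + med3 s (x j) (x k) < x m then 1 else 0)
        * (exp_density (x m) * (exp_density (x j) * exp_density (x k)))) \<partial>PiM (insert m {j,k}) (\<lambda>_. lborel))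
      = (\<integral>\<^sup>+t. \<integral>\<^sup>+x. ennreal (exp_density t) * ennreal ((if med3 s (x j) (x k) < t - u then 1 else 0)
        * (exp_density (x j) * exp_density (x k))) \<partial>PiM {j,k} (\<lambda>_. lborel) \<partial>lborel)"
    using assms by (subst nn_integral_PiM_insert_lborel)
      (auto intro!: nn_integral_cong simp: ennreal_mult'[symmetric] algebra_simps)
  also have "\<dots> = (\<integral>\<^sup>+t. ennreal (exp_density t) * ennreal (exp_med3_fixed_cdf s (t - u)) \<partial>lborel)"
    using assms by (intro nn_integral_cong, subst nn_integral_cmult) (auto simp: nn_integral_med3_fixed_exp_less)
  finally show ?thesis .
qed

lemma exp_cond_prob_evB_middle:
  assumes perm: "(i,j,k) \<in> {(1::nat,2::nat,3::nat),(2,1,3),(3,1,2)}" and s: "0 \<le> s"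
  shows "exp_cond_prob evB i s = ennreal (1/6 + exp (-s)^2/2 - exp (-s)^3/3)"
proof -
  have I: "{..<5::nat} - {i} = insert 0 (insert 4 {j,k})" and d: "distinct [4, j, k]" "0 \<notin> {4, j, k}"
    using perm by auto
  have "exp_cond_prob evB i s = (\<integral>\<^sup>+x. ennreal ((if x 0 + med3 s (x j) (x k) < x 4 then 1 else 0)
      * (exp_density (x 0) * (exp_density (x 4) * (exp_density (x j) * exp_density (x k)))))
      \<partial>PiM (insert 0 (insert 4 {j,k})) (\<lambda>_. lborel))"
    unfolding exp_cond_prob_def I[symmetric]
    by (intro nn_integral_cong) (simp add: indicator_evB_fun_upd_middle[OF perm] exp_density_except_middle[OF perm])
  also have "\<dots> = (\<integral>\<^sup>+u. ennreal (exp_density u) * (\<integral>\<^sup>+x. ennreal ((if u + med3 s (x j) (x k) < x 4 then 1 else 0)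
      * (exp_density (x 4) * (exp_density (x j) * exp_density (x k)))) \<partial>PiM (insert 4 {j,k}) (\<lambda>_. lborel)) \<partial>lborel)"
    using d by (subst nn_integral_PiM_insert_lborel)
      (auto intro!: nn_integral_cong simp: nn_integral_cmult[symmetric] ennreal_mult'[symmetric])
  also have "\<dots> = (\<integral>\<^sup>+u. ennreal (exp_density u)
      * (\<integral>\<^sup>+t. ennreal (exp_density t) * ennreal (exp_med3_fixed_cdf s (t - u)) \<partial>lborel) \<partial>lborel)"
    by (simp only: nn_integral_shifted_med3_fixed_exp_less[OF d(1)])
  also have "\<dots> = ennreal (1/6 + exp (-s)^2/2 - exp (-s)^3/3)"
    by (rule nn_integral_exp_iterated_med3_fixed_cdf[OF s])
  finally show ?thesis .
qed

subsection \<open>The derivative of \<open>b\<close> at zero\<close>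

definition cond_evA :: "nat \<Rightarrow> real \<Rightarrow> real" where
  "cond_evA i s = (if i = 0 then 1/4 else if i = 4 then (1 - exp (-s))^3
    else exp (-s) - exp (-s)^2 + exp (-s)^3/3)"

definition cond_evB :: "nat \<Rightarrow> real \<Rightarrow> real" where
  "cond_evB i s = (if i = 0 then exp (-s)/2 else if i = 4 then (1 - exp (-s))^3
    else 1/6 + exp (-s)^2/2 - exp (-s)^3/3)"

lemma less_5_cases:
  assumes "i < (5::nat)"
  obtains "i = 0" | "(i,2,3) \<in> {(1::nat,2::nat,3::nat),(2,1,3),(3,1,2)}"
    | "(i,1,3) \<in> {(1::nat,2::nat,3::nat),(2,1,3),(3,1,2)}" | "(i,1,2) \<in> {(1::nat,2::nat,3::nat),(2,1,3),(3,1,2)}"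
    | "i = 4"
  using assms by (auto simp: less_Suc_eq numeral_eq_Suc)

lemma exp_cond_prob_evA:
  assumes "i < 5" "0 \<le> s"
  shows "exp_cond_prob evA i s = ennreal (cond_evA i s)"
proof (cases rule: less_5_cases[OF assms(1)])
  case 1
  then show ?thesis by (simp add: cond_evA_def exp_cond_prob_evA_0)
next
  case 2
  then show ?thesis using exp_cond_prob_evA_middle[OF 2 assms(2)] by (auto simp: cond_evA_def)
next
  case 3
  then show ?thesis using exp_cond_prob_evA_middle[OF 3 assms(2)] by (auto simp: cond_evA_def)
next
  case 4
  then show ?thesis using exp_cond_prob_evA_middle[OF 4 assms(2)] by (auto simp: cond_evA_def)
next
  case 5
  then show ?thesis by (simp add: cond_evA_def exp_cond_prob_evA_4[OF assms(2)])
qed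

lemma exp_cond_prob_evB:
  assumes "i < 5" "0 \<le> s"
  shows "exp_cond_prob evB i s = ennreal (cond_evB i s)"
proof (cases rule: less_5_cases[OF assms(1)])
  case 1
  then show ?thesis by (simp add: cond_evB_def exp_cond_prob_evB_0[OF assms(2)])
next
  case 2
  then show ?thesis using exp_cond_prob_evB_middle[OF 2 assms(2)] by (auto simp: cond_evB_def)
next
  case 3
  then show ?thesis using exp_cond_prob_evB_middle[OF 3 assms(2)] by (auto simp: cond_evB_def)
next
  case 4
  then show ?thesis using exp_cond_prob_evB_middle[OF 4 assms(2)] by (auto simp: cond_evB_def)
next
  case 5
  then show ?thesis by (simp add: cond_evB_def exp_cond_prob_evB_4[OF assms(2)])
qed

lemma borel_measurable_cond_evA [measurable]: "cond_evA i \<in> borel_measurable borel"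
  unfolding cond_evA_def by measurable

lemma borel_measurable_cond_evB [measurable]: "cond_evB i \<in> borel_measurable borel"
  unfolding cond_evB_def by measurable

lemma exp_neg_power_bounds:
  fixes s :: real
  assumes "0 \<le> s"
  shows "0 < exp (-s)" "exp (-s) \<le> 1" "exp (-s)^2 \<le> exp (-s)" "exp (-s)^3 \<le> exp (-s)^2"
    "0 \<le> exp (-s)^3" "(1 - exp (-s))^3 \<le> 1"
proof -
  show e: "0 < exp (-s)" "exp (-s) \<le> 1"
    using assms by auto
  then show "exp (-s)^2 \<le> exp (-s)" "exp (-s)^3 \<le> exp (-s)^2"
    by (simp add: power2_eq_square mult_left_le, intro power_decreasing) auto
  show "0 \<le> exp (-s)^3" "(1 - exp (-s))^3 \<le> 1"
    using e by (simp_all add: power_le_one)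
qed

lemma cond_evA_bounds:
  assumes "0 \<le> s"
  shows "0 \<le> cond_evA i s" "cond_evA i s \<le> 1"
  using exp_neg_power_bounds[OF assms] unfolding cond_evA_def by (simp_all split: if_splits, linarith+)

lemma cond_evB_bounds:
  assumes "0 \<le> s"
  shows "0 \<le> cond_evB i s" "cond_evB i s \<le> 1"
  using exp_neg_power_bounds[OF assms] unfolding cond_evB_def by (simp_all split: if_splits, linarith+)

text \<open>The symmetrised kernel \<open>\<Psi>\<close> puts the conditioned variable in each of the five positions
  with probability \<open>1/5\<close>, so this is the identity \<open>\<psi>(s) = E[\<Psi> | X\<^sub>1 = s]\<close>.\<close>

lemma sum_cond_evA_minus_cond_evB: "(\<Sum>i<5. cond_evA i s) - (\<Sum>i<5. cond_evB i s) = 5 * psi s"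
proof -
  have "exp (- (3 * s)) = exp (-s)^3" "exp (- (2 * s)) = exp (-s)^2"
    by (simp_all flip: exp_of_nat_mult)
  then show ?thesis
    by (simp add: numeral_eq_Suc cond_evA_def cond_evB_def psi_def algebra_simps power2_eq_square power3_eq_cube)
qed

lemma sets_evA: "evA \<inter> space lborel5 \<in> sets lborel5"
proof -
  have "evA \<inter> space lborel5 = {\<omega> \<in> space lborel5. max (\<omega> 1) (max (\<omega> 2) (\<omega> 3)) < \<omega> 4}"
    by (auto simp: evA_def)
  also have "\<dots> \<in> sets lborel5" by measurable
  finally show ?thesis .
qed

lemma sets_evB: "evB \<inter> space lborel5 \<in> sets lborel5"
proof -
  have "evB \<inter> space lborel5 = {\<omega> \<in> space lborel5. \<omega> 0 + med3 (\<omega> 1) (\<omega> 2) (\<omega> 3) < \<omega> 4}"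
    by (auto simp: evB_def)
  also have "\<dots> \<in> sets lborel5" by measurable
  finally show ?thesis .
qed

lemma integral_indicator_Int_space:
  "(\<integral>\<omega>. indicator (E \<inter> space M) \<omega> * f \<omega> \<partial>M) = (\<integral>\<omega>. indicator E \<omega> * f \<omega> \<partial>M)"
  by (intro Bochner_Integration.integral_cong) (auto simp: indicator_def)

lemma integral_score_evA_minus_evB:
  assumes h: "integrable lborel h" "\<And>x. x < 0 \<Longrightarrow> h x = 0"
  shows "(\<integral>\<omega>. indicator evA \<omega> * (\<Sum>i<5. h (\<omega> i) * exp_density_except i \<omega>) \<partial>lborel5)
      - (\<integral>\<omega>. indicator evB \<omega> * (\<Sum>i<5. h (\<omega> i) * exp_density_except i \<omega>) \<partial>lborel5)
    = 5 * (\<integral>x\<in>{0..}. psi x * h x \<partial>lborel)"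
proof -
  note A = integral_indicator_score[OF sets_evA h, of cond_evA]
  note B = integral_indicator_score[OF sets_evB h, of cond_evB]
  have p: "exp_cond_prob (evA \<inter> space lborel5) i s = ennreal (cond_evA i s)"
    "exp_cond_prob (evB \<inter> space lborel5) i s = ennreal (cond_evB i s)" if "i < 5" "0 \<le> s" for i s
    using that by (simp_all add: exp_cond_prob_Int_space exp_cond_prob_evA exp_cond_prob_evB)
  have iA: "integrable lborel (\<lambda>s. h s * (\<Sum>i<5. cond_evA i s))"
    by (rule A(1)) (simp_all add: p cond_evA_bounds)
  have iB: "integrable lborel (\<lambda>s. h s * (\<Sum>i<5. cond_evB i s))"
    by (rule B(1)) (simp_all add: p cond_evB_bounds)
  have "(\<integral>\<omega>. indicator evA \<omega> * (\<Sum>i<5. h (\<omega> i) * exp_density_except i \<omega>) \<partial>lborel5)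
      - (\<integral>\<omega>. indicator evB \<omega> * (\<Sum>i<5. h (\<omega> i) * exp_density_except i \<omega>) \<partial>lborel5)
    = (\<integral>s. h s * (\<Sum>i<5. cond_evA i s) \<partial>lborel) - (\<integral>s. h s * (\<Sum>i<5. cond_evB i s) \<partial>lborel)"
    using A(2) B(2) p cond_evA_bounds cond_evB_bounds by (simp add: integral_indicator_Int_space)
  also have "\<dots> = (\<integral>s. h s * (\<Sum>i<5. cond_evA i s) - h s * (\<Sum>i<5. cond_evB i s) \<partial>lborel)"
    by (rule Bochner_Integration.integral_diff[symmetric, OF iA iB])
  also have "\<dots> = (\<integral>s. h s * (5 * psi s) \<partial>lborel)"
    by (simp flip: right_diff_distrib add: sum_cond_evA_minus_cond_evB)
  also have "\<dots> = 5 * (\<integral>x\<in>{0..}. psi x * h x \<partial>lborel)"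
    unfolding set_lebesgue_integral_def
    by (subst integral_mult_right_zero[symmetric], intro Bochner_Integration.integral_cong)
       (auto simp: h(2) indicator_def)
  finally show ?thesis .
qed

lemma emeasure_exp_sample_evA:
  "emeasure (density lborel5 (\<lambda>\<omega>. \<Prod>j<5. ennreal (exp_density (\<omega> j)))) (evA \<inter> space lborel5) = ennreal (1/4)"
proof -
  have "emeasure (density lborel5 (\<lambda>\<omega>. \<Prod>j<5. ennreal (exp_density (\<omega> j)))) (evA \<inter> space lborel5)
      = (\<integral>\<^sup>+s. ennreal (exp_density s * (1/4)) \<partial>lborel)"
    by (rule emeasure_exp_sample[OF sets_evA]) (simp add: exp_cond_prob_Int_space exp_cond_prob_evA_0)
  also have "\<dots> = (\<integral>\<^sup>+s. ennreal (exp_density s) * ennreal (1/4) \<partial>lborel)"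
    by (simp only: ennreal_mult'[OF exp_density_nonneg])
  also have "\<dots> = ennreal (1/4)"
    by (simp add: nn_integral_multc nn_integral_exp_density)
  finally show ?thesis .
qed

lemma emeasure_exp_sample_evB:
  "emeasure (density lborel5 (\<lambda>\<omega>. \<Prod>j<5. ennreal (exp_density (\<omega> j)))) (evB \<inter> space lborel5) = ennreal (1/4)"
proof -
  have "emeasure (density lborel5 (\<lambda>\<omega>. \<Prod>j<5. ennreal (exp_density (\<omega> j)))) (evB \<inter> space lborel5)
      = (\<integral>\<^sup>+s. ennreal (exp_density s * (exp (-s)/2)) \<partial>lborel)"
    by (rule emeasure_exp_sample[OF sets_evB]) (simp add: exp_cond_prob_Int_space exp_cond_prob_evB_0)
  also have "\<dots> = (\<integral>\<^sup>+s. ennreal (exp (-s) * exp (-s) / 2 * indicator {0..} s) \<partial>lborel)"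
    by (intro nn_integral_cong) (simp add: exp_density_def)
  also have "\<dots> = ennreal (0 - (- exp (- 0) * exp (- 0) / 4))"
    by (rule nn_integral_FTC_atLeast_indicator[where F="\<lambda>s. - exp (-s) * exp (-s) / 4"])
       (auto intro!: derivative_eq_intros, real_asymp)
  finally show ?thesis by simp
qed

lemma bfun_eq_0_at_exp:
  assumes "\<And>x. g x 0 = exp_density x"
  shows "bfun g 0 = 0"
proof -
  have "sample5 g 0 = density lborel5 (\<lambda>\<omega>. \<Prod>j<5. ennreal (exp_density (\<omega> j)))"
    unfolding sample5_def assms by (rule PiM_density_lborel) (auto simp: nn_integral_exp_density)
  then show ?thesis
    by (simp add: bfun_def prob5_def measure_def emeasure_exp_sample_evA emeasure_exp_sample_evB)
qed

theorem lemma2: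
  fixes g :: "real \<Rightarrow> real \<Rightarrow> real" and h :: "real \<Rightarrow> real"
  assumes meas: "\<And>\<theta>. \<theta> \<ge> 0 \<Longrightarrow> (\<lambda>x. g x \<theta>) \<in> borel_measurable borel"
    and nonneg: "\<And>x \<theta>. \<theta> \<ge> 0 \<Longrightarrow> g x \<theta> \<ge> 0"
    and support: "\<And>x \<theta>. \<theta> \<ge> 0 \<Longrightarrow> x < 0 \<Longrightarrow> g x \<theta> = 0"
    and total: "\<And>\<theta>. \<theta> \<ge> 0 \<Longrightarrow> (\<integral>\<^sup>+ x. ennreal (g x \<theta>) \<partial>lborel) = 1"
    and g0: "\<And>x. x \<ge> 0 \<Longrightarrow> g x 0 = exp (- x)"
    and hderiv: "\<And>x. ((\<lambda>\<theta>. g x \<theta>) has_real_derivative h x) (at_right 0)"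
    and hint: "integrable lborel h"
    and diffA: "((\<lambda>\<theta>. prob5 g \<theta> evA) has_real_derivative
                  (\<integral>\<omega>. indicator evA \<omega> * dens_deriv g h \<omega> \<partial>(PiM {..<5} (\<lambda>_. lborel))))
                (at_right 0)"
    and diffB: "((\<lambda>\<theta>. prob5 g \<theta> evB) has_real_derivative
                  (\<integral>\<omega>. indicator evB \<omega> * dens_deriv g h \<omega> \<partial>(PiM {..<5} (\<lambda>_. lborel))))
                (at_right 0)"
  shows "(\<lambda>\<theta>. bfun g \<theta> - 5 * \<theta> * (\<integral>x\<in>{0..}. psi x * h x \<partial>lborel))
           \<in> o[at_right 0](\<lambda>\<theta>. \<theta>)"
proof -
  have g_exp: "g x 0 = exp_density x" for x
    by (cases "0 \<le> x") (simp_all add: exp_density_def g0 support)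
  have h_neg: "h x = 0" if "x < 0" for x
    using hderiv[of x] by (rule has_real_derivative_at_right_const_imp_zero) (simp add: support that)
  have "dens_deriv g h = (\<lambda>\<omega>. \<Sum>i<5. h (\<omega> i) * exp_density_except i \<omega>)"
    by (intro ext) (simp add: dens_deriv_def exp_density_except_def g_exp)
  then have "(bfun g has_real_derivative 5 * (\<integral>x\<in>{0..}. psi x * h x \<partial>lborel)) (at_right 0)"
    using DERIV_diff[OF diffA diffB] integral_score_evA_minus_evB[OF hint h_neg]
    by (simp add: bfun_def[abs_def])
  from has_real_derivative_at_right_0_imp_smallo[OF this bfun_eq_0_at_exp[of g, OF g_exp]]
  show ?thesis by (simp add: mult_ac)
qed

end
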